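(* The stabilisers in $\mathfrak{gl}(7,\mathbb R)$ (under the natural action on forms) of the $3$-form $\alpha$ and of the $4$-form $\beta$ are two different subalgebras, each isomorphic to the split real form $\mathfrak g_2^*$ of the exceptional Lie algebra $\mathfrak g_2$, and their intersection is the subalgebra $\mathfrak{so}(4)$ spanned by $\varpi_1,\varpi_2,\varpi_3,\omega_1-2w^{23},\omega_2-2w^{31},\omega_3-2w^{12}$.
   Context: On $\mathbb R^7$ with basis $e_1,\dots,e_7$ and dual basis $e^1,\dots,e^7$, let $w^s=e^{4+s}$ ($s=1,2,3$), $e^{ij}=e^i\wedge e^j$ etc., $\omega_1=e^{12}-e^{34}$, $\omega_2=e^{13}-e^{42}$, $\omega_3=e^{14}-e^{23}$, $\varpi_1=e^{12}+e^{34}$, $\varpi_2=e^{13}+e^{42}$, $\varpi_3=e^{14}+e^{23}$, and $\alpha=\omega_1\wedge w^1+\omega_2\wedge w^2+\omega_3\wedge w^3-3w^{123}$, $\beta=-\omega_1\wedge w^{23}-\omega_2\wedge w^{31}-\omega_3\wedge w^{12}-3e^{1234}$. $2$-forms are regarded as elements of $\mathfrak{so}(7)\subset\mathfrak{gl}(7,\mathbb R)$ via $e^{ij}\mapsto e^i\otimes e_j-e^j\otimes e_i$ (i.e. $\omega$ acts on $v$ by $v\mapsto v\lrcorner\omega$ after identifying $T$ and $T^*$ with the standard metric). *)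

theory Defs
  imports "HOL-Analysis.Analysis"
begin

text \<open>Setting: R^7 = real^7.  The basis vector e_i (i = 1..7) is axis (idx i) 1,
  where idx i = of_nat (i - 1) :: 7 (a bijection {1..7} -> UNIV :: 7 set).
  Exterior k-forms are represented as k-linear alternating maps, i.e. functions
  taking a list of k vectors to a real number.\<close>

definition idx :: "nat \<Rightarrow> 7" where
  "idx i = of_nat (i - 1)"

text \<open>The decomposable basis form e^{i_1 ... i_k}, evaluated on vectors v_1..v_k:
  det [ e^{i_p}(v_q) ]_{p,q} (Leibniz formula).\<close>
definition ef :: "nat list \<Rightarrow> (real^7) list \<Rightarrow> real" where
  "ef I vs = (\<Sum>\<sigma> | \<sigma> permutes {..<length I}.
      of_int (sign \<sigma>) * (\<Prod>p<length I. (vs ! (\<sigma> p)) $ idx (I ! p)))"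

text \<open>alpha = omega_1 ^ w^1 + omega_2 ^ w^2 + omega_3 ^ w^3 - 3 w^{123}, expanded
  (omega_1 = e12 - e34, omega_2 = e13 - e42, omega_3 = e14 - e23, w^s = e^{4+s}).\<close>
definition alpha :: "(real^7) list \<Rightarrow> real" where
  "alpha vs = ef [1,2,5] vs - ef [3,4,5] vs
            + ef [1,3,6] vs - ef [4,2,6] vs
            + ef [1,4,7] vs - ef [2,3,7] vs
            - 3 * ef [5,6,7] vs"

text \<open>beta = - omega_1 ^ w^{23} - omega_2 ^ w^{31} - omega_3 ^ w^{12} - 3 e^{1234}, expanded.\<close>
definition beta :: "(real^7) list \<Rightarrow> real" where
  "beta vs = - (ef [1,2,6,7] vs - ef [3,4,6,7] vs)
           - (ef [1,3,7,5] vs - ef [4,2,7,5] vs)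
           - (ef [1,4,5,6] vs - ef [2,3,5,6] vs)
           - 3 * ef [1,2,3,4] vs"

definition form_act :: "real^7^7 \<Rightarrow> ((real^7) list \<Rightarrow> real) \<Rightarrow> (real^7) list \<Rightarrow> real" where
  "form_act A \<phi> vs = - (\<Sum>p<length vs. \<phi> (vs[p := A *v (vs ! p)]))"

definition stab :: "nat \<Rightarrow> ((real^7) list \<Rightarrow> real) \<Rightarrow> (real^7^7) set" where
  "stab k \<phi> = {A. \<forall>vs. length vs = k \<longrightarrow> form_act A \<phi> vs = 0}"

definition lie_br :: "'a::comm_ring_1^'n^'n \<Rightarrow> 'a^'n^'n \<Rightarrow> 'a^'n^'n" where
  "lie_br X Y = X ** Y - Y ** X"

definition lie_subalgebra :: "(real^'n^'n) set \<Rightarrow> bool" where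
  "lie_subalgebra S \<longleftrightarrow> subspace S \<and> (\<forall>X\<in>S. \<forall>Y\<in>S. lie_br X Y \<in> S)"

definition lie_iso :: "(real^'n^'n) set \<Rightarrow> (real^'m^'m) set \<Rightarrow> bool" where
  "lie_iso S T \<longleftrightarrow> (\<exists>f. linear f \<and> bij_betw f S T \<and>
      (\<forall>X\<in>S. \<forall>Y\<in>S. f (lie_br X Y) = lie_br (f X) (f Y)))"

text \<open>The split real form g_2^* of g_2, realised (following Bryant) as the stabiliser in
  gl(7,R) of the standard split G_2 3-form
  phi~ = e123 - e1(e45 + e67) - e2(e46 - e57) + e3(e47 + e56).\<close>
definition phi_split :: "(real^7) list \<Rightarrow> real" where
  "phi_split vs = ef [1,2,3] vs - ef [1,4,5] vs - ef [1,6,7] vs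
                - ef [2,4,6] vs + ef [2,5,7] vs + ef [3,4,7] vs + ef [3,5,6] vs"

definition g2_split :: "(real^7^7) set" where
  "g2_split = stab 3 phi_split"

definition so4 :: "(real^4^4) set" where
  "so4 = {A. transpose A = - A}"

text \<open>Embedding of 2-forms into so(7): omega acts on v by v |-> v \<lrcorner> omega, i.e.
  the matrix M with M_{ba} = omega(e_a, e_b); thus e^{ij} |-> e^i (x) e_j - e^j (x) e_i.\<close>
definition so_of :: "((real^7) list \<Rightarrow> real) \<Rightarrow> real^7^7" where
  "so_of \<omega> = (\<chi> b a. \<omega> [axis a 1, axis b 1])"

definition so4_gens :: "(real^7^7) set" where
  "so4_gens = {so_of (\<lambda>vs. ef [1,2] vs + ef [3,4] vs),
               so_of (\<lambda>vs. ef [1,3] vs + ef [4,2] vs),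
               so_of (\<lambda>vs. ef [1,4] vs + ef [2,3] vs),
               so_of (\<lambda>vs. ef [1,2] vs - ef [3,4] vs - 2 * ef [6,7] vs),
               so_of (\<lambda>vs. ef [1,3] vs - ef [4,2] vs - 2 * ef [7,5] vs),
               so_of (\<lambda>vs. ef [1,4] vs - ef [2,3] vs - 2 * ef [5,6] vs)}"

end

theory Submission
  imports Defs
begin

text \<open>Both stabilisers are computed explicitly.  Evaluating the infinitesimal action on the
  35 basis tuples with increasing indices gives a linear system whose solutions form, in both
  cases, the same kind of \<open>14\<close>-dimensional family \<open>g2_conds c\<close>, with \<open>c = 3\<close> for \<open>alpha\<close>
  and \<open>c = 1/3\<close> for \<open>beta\<close>; the parameter \<open>c\<close> only relates the two off-diagonal blocks of
  the splitting \<open>\<real>\<^sup>7 = \<real>\<^sup>4 \<oplus> \<real>\<^sup>3\<close>.  Rescaling the \<open>\<real>\<^sup>3\<close> factor by \<open>t\<close> turns \<open>c\<close> into \<open>c/t\<^sup>2\<close>, so the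
  two stabilisers are conjugate, and \<open>alpha\<close> is a multiple of the pull-back of Bryant's split
  form by an explicit linear map, so both are conjugate to \<open>g\<^sub>2\<^sup>*\<close>.  For \<open>c \<noteq> c'\<close> the two
  families meet where both off-diagonal blocks vanish; such a matrix is determined by its
  \<open>\<real>\<^sup>4\<close> block, which can be any skew matrix, and this identifies the intersection with \<open>so(4)\<close>.\<close>

lemma exhaust_7:
  fixes x :: 7
  shows "x = 0 \<or> x = 1 \<or> x = 2 \<or> x = 3 \<or> x = 4 \<or> x = 5 \<or> x = 6"
proof (induct x)
  case (of_int z)
  then have "z = 0 \<or> z = 1 \<or> z = 2 \<or> z = 3 \<or> z = 4 \<or> z = 5 \<or> z = 6" by fastforce
  then show ?case by auto
qed

lemma forall_7: "(\<forall>i::7. P i) \<longleftrightarrow> P 0 \<and> P 1 \<and> P 2 \<and> P 3 \<and> P 4 \<and> P 5 \<and> P 6"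
  by (metis exhaust_7)

lemma UNIV_7: "UNIV = {0, 1, 2, 3, 4, 5, 6::7}"
  using exhaust_7 by auto

lemma sum_7: "sum f (UNIV::7 set) = f 0 + f 1 + f 2 + f 3 + f 4 + f 5 + f 6"
  unfolding UNIV_7 by (simp add: ac_simps)

lemma sum_4: "sum f (UNIV::4 set) = f 1 + f 2 + f 3 + f 4"
  unfolding UNIV_4 by (simp add: ac_simps)

definition multilinear_form :: "nat \<Rightarrow> ((real^7) list \<Rightarrow> real) \<Rightarrow> bool" where
  "multilinear_form k \<phi> \<longleftrightarrow> (\<forall>vs p x y c. length vs = k \<longrightarrow> p < k \<longrightarrow>
     \<phi> (vs[p := x + y]) = \<phi> (vs[p := x]) + \<phi> (vs[p := y]) \<and>
     \<phi> (vs[p := c *\<^sub>R x]) = c * \<phi> (vs[p := x]))"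

lemma multilinear_formD:
  assumes "multilinear_form k \<phi>" "length vs = k" "p < k"
  shows multilinear_form_add_arg: "\<phi> (vs[p := x + y]) = \<phi> (vs[p := x]) + \<phi> (vs[p := y])"
    and multilinear_form_scaleR_arg: "\<phi> (vs[p := c *\<^sub>R x]) = c * \<phi> (vs[p := x])"
  using assms unfolding multilinear_form_def by blast+

lemma multilinear_form_diff_arg:
  assumes "multilinear_form k \<phi>" "length vs = k" "p < k"
  shows "\<phi> (vs[p := x - y]) = \<phi> (vs[p := x]) - \<phi> (vs[p := y])"
  using multilinear_form_add_arg[OF assms, of x "(-1) *\<^sub>R y"]
    multilinear_form_scaleR_arg[OF assms, of "-1" y] by simp

lemma multilinear_form_zero_arg:
  assumes "multilinear_form k \<phi>" "length vs = k" "p < k"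
  shows "\<phi> (vs[p := 0]) = 0"
  using multilinear_form_scaleR_arg[OF assms, of 0 0] by simp

lemma multilinear_form_add:
  "multilinear_form k \<phi> \<Longrightarrow> multilinear_form k \<psi> \<Longrightarrow> multilinear_form k (\<lambda>vs. \<phi> vs + \<psi> vs)"
  by (simp add: multilinear_form_def algebra_simps)

lemma multilinear_form_diff:
  "multilinear_form k \<phi> \<Longrightarrow> multilinear_form k \<psi> \<Longrightarrow> multilinear_form k (\<lambda>vs. \<phi> vs - \<psi> vs)"
  by (simp add: multilinear_form_def algebra_simps)

lemma multilinear_form_cmult: "multilinear_form k \<phi> \<Longrightarrow> multilinear_form k (\<lambda>vs. a * \<phi> vs)"
  by (simp add: multilinear_form_def algebra_simps)

lemma multilinear_form_uminus: "multilinear_form k \<phi> \<Longrightarrow> multilinear_form k (\<lambda>vs. - \<phi> vs)"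
  by (simp add: multilinear_form_def algebra_simps)

lemma prod_list_update_permutes:
  assumes \<sigma>: "\<sigma> permutes {..<n}" and q: "q < n" and l: "length vs = n"
  shows "(\<Prod>p<n. (vs[q := z] ! \<sigma> p) $ i p)
       = z $ i (inv \<sigma> q) * (\<Prod>p\<in>{..<n} - {inv \<sigma> q}. (vs ! \<sigma> p) $ i p)"
proof -
  let ?r = "inv \<sigma> q"
  have r: "?r < n" "\<sigma> ?r = q"
    using permutes_in_image[OF permutes_inv[OF \<sigma>], of q] q permutes_inverses(1)[OF \<sigma>] by auto
  have "vs[q := z] ! \<sigma> p = vs ! \<sigma> p" if "p \<noteq> ?r" for p
    using that permutes_inverses(2)[OF \<sigma>] by (metis nth_list_update_neq)
  then have "(\<Prod>p\<in>{..<n} - {?r}. (vs[q := z] ! \<sigma> p) $ i p) = (\<Prod>p\<in>{..<n} - {?r}. (vs ! \<sigma> p) $ i p)"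
    by (intro prod.cong) auto
  then show ?thesis
    using prod.remove[of "{..<n}" ?r "\<lambda>p. (vs[q := z] ! \<sigma> p) $ i p"] r l q by simp
qed

lemma multilinear_ef:
  assumes "length I = k"
  shows "multilinear_form k (ef I)"
proof -
  \<comment> \<open>In each term of the Leibniz sum exactly one factor sees the updated slot.\<close>
  have lin: "ef I (vs[q := z]) =
      (\<Sum>\<sigma> | \<sigma> permutes {..<length I}. z $ idx (I ! inv \<sigma> q) *
         (of_int (sign \<sigma>) * (\<Prod>p\<in>{..<length I} - {inv \<sigma> q}. (vs ! \<sigma> p) $ idx (I ! p))))"
    if "length vs = length I" "q < length I" for vs q z
    unfolding ef_def using that
    by (intro sum.cong refl) (simp add: prod_list_update_permutes[where i = "\<lambda>p. idx (I ! p)"])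
  show ?thesis
    unfolding multilinear_form_def assms[symmetric]
    by (simp add: lin sum.distrib sum_distrib_left algebra_simps)
qed

lemma stab_subspace:
  assumes "multilinear_form k \<phi>"
  shows "subspace (stab k \<phi>)"
proof -
  have "form_act 0 \<phi> vs = 0" if "length vs = k" for vs
    unfolding form_act_def using multilinear_form_zero_arg[OF assms that] that by simp
  moreover have "form_act (A + B) \<phi> vs = form_act A \<phi> vs + form_act B \<phi> vs"
    if "length vs = k" for A B vs
    unfolding form_act_def using multilinear_form_add_arg[OF assms that] that
    by (simp add: matrix_vector_mult_add_rdistrib sum.distrib)
  moreover have "form_act (c *\<^sub>R A) \<phi> vs = c * form_act A \<phi> vs" if "length vs = k" for c A vs
    unfolding form_act_def using multilinear_form_scaleR_arg[OF assms that] that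
    by (simp add: scaleR_matrix_vector_assoc[symmetric] sum_distrib_left)
  ultimately show ?thesis
    unfolding subspace_def stab_def by simp
qed

lemma sum_lessThan_split_at:
  fixes f :: "nat \<Rightarrow> 'a::comm_monoid_add"
  assumes "p < k"
  shows "(\<Sum>q<k. f q) = f p + (\<Sum>q<k. if q \<noteq> p then f q else 0)"
proof -
  have "(\<Sum>q<k. f q) = (\<Sum>q<k. (if q = p then f q else 0) + (if q \<noteq> p then f q else 0))"
    by (rule sum.cong) auto
  with assms show ?thesis
    by (simp add: sum.distrib)
qed

lemma stab_product_sum:
  assumes X: "X \<in> stab k \<phi>" and l: "length vs = k"
  shows "(\<Sum>p<k. \<phi> (vs[p := (X ** Y) *v (vs ! p)])) =
    - (\<Sum>p<k. \<Sum>q<k. if q \<noteq> p then \<phi> (vs[p := Y *v (vs ! p), q := X *v (vs ! q)]) else 0)"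
proof -
  have "\<phi> (vs[p := (X ** Y) *v (vs ! p)]) =
      - (\<Sum>q<k. if q \<noteq> p then \<phi> (vs[p := Y *v (vs ! p), q := X *v (vs ! q)]) else 0)"
    if p: "p < k" for p
  proof -
    \<comment> \<open>Invariance under \<open>X\<close> of the tuple carrying \<open>Y v\<^sub>p\<close> in slot \<open>p\<close>.\<close>
    let ?ws = "vs[p := Y *v (vs ! p)]"
    have "(\<Sum>q<k. \<phi> (?ws[q := X *v (?ws ! q)])) = 0"
      using X l unfolding stab_def form_act_def by simp
    moreover have "?ws[p := X *v (?ws ! p)] = vs[p := (X ** Y) *v (vs ! p)]"
      using p l by (simp add: matrix_vector_mul_assoc)
    moreover have "(\<Sum>q<k. if q \<noteq> p then \<phi> (?ws[q := X *v (?ws ! q)]) else 0) =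
        (\<Sum>q<k. if q \<noteq> p then \<phi> (vs[p := Y *v (vs ! p), q := X *v (vs ! q)]) else 0)"
      by (rule sum.cong) auto
    ultimately show ?thesis
      using sum_lessThan_split_at[OF p, of "\<lambda>q. \<phi> (?ws[q := X *v (?ws ! q)])"] by simp
  qed
  then show ?thesis
    by (simp add: sum_negf)
qed

lemma lie_br_in_stab:
  assumes \<phi>: "multilinear_form k \<phi>" and A: "A \<in> stab k \<phi>" and B: "B \<in> stab k \<phi>"
  shows "lie_br A B \<in> stab k \<phi>"
  unfolding stab_def mem_Collect_eq
proof (intro allI impI)
  fix vs :: "(real^7) list"
  assume l: "length vs = k"
  \<comment> \<open>By \<open>stab_product_sum\<close> both products reduce to the same double sum over pairs of slots.\<close>
  have swap: "(\<Sum>p<k. \<Sum>q<k. if q \<noteq> p then \<phi> (vs[p := B *v (vs ! p), q := A *v (vs ! q)]) else 0)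
      = (\<Sum>p<k. \<Sum>q<k. if q \<noteq> p then \<phi> (vs[p := A *v (vs ! p), q := B *v (vs ! q)]) else 0)"
    by (subst sum.swap) (intro sum.cong refl, auto simp: list_update_swap)
  have "form_act (lie_br A B) \<phi> vs =
      - ((\<Sum>p<k. \<phi> (vs[p := (A ** B) *v (vs ! p)])) - (\<Sum>p<k. \<phi> (vs[p := (B ** A) *v (vs ! p)])))"
    unfolding form_act_def lie_br_def using l multilinear_form_diff_arg[OF \<phi> l]
    by (simp add: matrix_vector_mult_diff_rdistrib sum_subtractf)
  also have "\<dots> = 0"
    using stab_product_sum[OF A l, of B] stab_product_sum[OF B l, of A] swap by simp
  finally show "form_act (lie_br A B) \<phi> vs = 0" .
qed

lemma lie_subalgebra_stab: "multilinear_form k \<phi> \<Longrightarrow> lie_subalgebra (stab k \<phi>)"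
  unfolding lie_subalgebra_def using stab_subspace lie_br_in_stab by blast

lemma form_act_pullback:
  assumes \<phi>: "\<forall>vs. length vs = k \<longrightarrow> \<phi> vs = c * \<psi> (map ((*v) P) vs)"
    and QP: "Q ** P = mat 1" and l: "length vs = k"
  shows "form_act A \<phi> vs = c * form_act (P ** A ** Q) \<psi> (map ((*v) P) vs)"
proof -
  have "(P ** A ** Q) *v (P *v x) = P *v (A *v x)" for x
    by (metis QP matrix_mul_assoc matrix_vector_mul_assoc matrix_mul_rid)
  with \<phi> l show ?thesis
    unfolding form_act_def by (simp add: map_update sum_distrib_left)
qed

lemma stab_pullback:
  assumes \<phi>: "\<forall>vs. length vs = k \<longrightarrow> \<phi> vs = c * \<psi> (map ((*v) P) vs)"
    and c: "c \<noteq> 0" and PQ: "P ** Q = mat 1" and QP: "Q ** P = mat 1"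
  shows "stab k \<phi> = {A. P ** A ** Q \<in> stab k \<psi>}"
proof (intro set_eqI iffI; simp)
  fix A
  assume A: "A \<in> stab k \<phi>"
  show "P ** A ** Q \<in> stab k \<psi>"
    unfolding stab_def mem_Collect_eq
  proof (intro allI impI)
    fix ws :: "(real^7) list"
    assume l: "length ws = k"
    have "map ((*v) P) (map ((*v) Q) ws) = ws"
      by (simp add: map_idI matrix_vector_mul_assoc PQ)
    then show "form_act (P ** A ** Q) \<psi> ws = 0"
      using form_act_pullback[OF \<phi> QP, of "map ((*v) Q) ws" A] A l c by (simp add: stab_def)
  qed
next
  fix A
  assume "P ** A ** Q \<in> stab k \<psi>"
  then show "A \<in> stab k \<phi>"
    using form_act_pullback[OF \<phi> QP] by (simp add: stab_def)
qed

lemma linear_matrix_conj: "linear (\<lambda>A::real^'n^'n. P ** A ** Q)"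
  by (rule linearI) (simp_all add: vec_eq_iff matrix_matrix_mult_def
      sum_distrib_left sum_distrib_right sum.distrib algebra_simps)

lemma lie_iso_conj:
  fixes P Q :: "real^'n^'n"
  assumes S: "S = {A. P ** A ** Q \<in> T}" and PQ: "P ** Q = mat 1" and QP: "Q ** P = mat 1"
  shows "lie_iso S T"
proof -
  have bij: "bij_betw (\<lambda>A. P ** A ** Q) S T"
  proof (rule bij_betw_byWitness[where f'="\<lambda>B. Q ** B ** P"])
    show "\<forall>A\<in>S. Q ** (P ** A ** Q) ** P = A"
      by (simp add: matrix_mul_assoc QP) (simp add: matrix_mul_assoc[symmetric] QP)
    show "\<forall>B\<in>T. P ** (Q ** B ** P) ** Q = B"
      by (simp add: matrix_mul_assoc PQ) (simp add: matrix_mul_assoc[symmetric] PQ)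
    show "(\<lambda>A. P ** A ** Q) ` S \<subseteq> T"
      using S by auto
    show "(\<lambda>B. Q ** B ** P) ` T \<subseteq> S"
      using S by (auto simp: matrix_mul_assoc PQ) (simp add: matrix_mul_assoc[symmetric] PQ)
  qed
  have "P ** (X ** Y) ** Q = (P ** X ** Q) ** (P ** Y ** Q)" for X Y :: "real^'n^'n"
  proof -
    have "(P ** X ** Q) ** (P ** Y ** Q) = P ** X ** (Q ** P) ** Y ** Q"
      by (simp add: matrix_mul_assoc)
    then show ?thesis
      by (simp add: QP matrix_mul_assoc)
  qed
  moreover have "P ** (X - Y) ** Q = P ** X ** Q - P ** Y ** Q" for X Y :: "real^'n^'n"
    using linear_diff[OF linear_matrix_conj[of P Q], of X Y] by simp
  ultimately have "P ** lie_br X Y ** Q = lie_br (P ** X ** Q) (P ** Y ** Q)" for X Y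
    by (simp add: lie_br_def)
  then show ?thesis
    unfolding lie_iso_def using linear_matrix_conj[of P Q] bij by blast
qed

fun sparse_matrix :: "(7 \<times> 7 \<times> real) list \<Rightarrow> real^7^7" where
  "sparse_matrix [] = 0"
| "sparse_matrix ((i, j, c) # es) = (\<chi> a b. if a = i \<and> b = j then c else 0) + sparse_matrix es"

declare sparse_matrix.simps [simp del]

lemma sparse_matrix_nth [simp]:
  "sparse_matrix [] $ a $ b = 0"
  "sparse_matrix ((i, j, c) # es) $ a $ b = (if a = i \<and> b = j then c else 0) + sparse_matrix es $ a $ b"
  by (simp_all add: sparse_matrix.simps)

lemma idx_simps: "idx 1 = 0" "idx 2 = 1" "idx 3 = 2" "idx 4 = 3" "idx 5 = 4" "idx 6 = 5" "idx 7 = 6"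
  by (simp_all add: idx_def)

lemma ef_pair: "ef [a, b] [u, v] = u $ idx a * v $ idx b - v $ idx a * u $ idx b"
proof -
  have "{..<length [a, b]} = insert 0 {1::nat}" by auto
  then show ?thesis
    unfolding ef_def
    by (simp add: sum_over_permutations_insert sign_compose permutation_swap_id sign_swap_id)
qed

lemma ef_laplace_3:
  "ef [a, b, c] [u, v, w] =
     u $ idx a * ef [b, c] [v, w] - v $ idx a * ef [b, c] [u, w] + w $ idx a * ef [b, c] [u, v]"
proof -
  have "{..<length [a, b, c]} = insert 0 (insert 1 {2::nat})" by auto
  then show ?thesis
    unfolding ef_pair unfolding ef_def
    by (simp add: sum_over_permutations_insert sign_compose permutation_swap_id sign_swap_id
        permutation_compose algebra_simps)
qed

lemma ef_laplace_4:
  "ef [a, b, c, d] [u, v, w, x] =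
     u $ idx a * ef [b, c, d] [v, w, x] - v $ idx a * ef [b, c, d] [u, w, x]
   + w $ idx a * ef [b, c, d] [u, v, x] - x $ idx a * ef [b, c, d] [u, v, w]"
proof -
  have "{..<length [a, b, c, d]} = insert 0 (insert 1 (insert 2 {3::nat}))" by auto
  then show ?thesis
    unfolding ef_laplace_3 ef_pair unfolding ef_def
    by (simp add: sum_over_permutations_insert sign_compose permutation_swap_id sign_swap_id
        permutation_compose algebra_simps)
qed

lemma form_act_3:
  "form_act A \<phi> [u, v, w] = - (\<phi> [A *v u, v, w] + \<phi> [u, A *v v, w] + \<phi> [u, v, A *v w])"
  by (simp add: form_act_def eval_nat_numeral)

lemma form_act_4:
  "form_act A \<phi> [u, v, w, x] =
     - (\<phi> [A *v u, v, w, x] + \<phi> [u, A *v v, w, x] + \<phi> [u, v, A *v w, x] + \<phi> [u, v, w, A *v x])"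
  by (simp add: form_act_def eval_nat_numeral)

lemma length_3_cases: "length vs = 3 \<Longrightarrow> \<exists>u v w. vs = [u, v, w]"
  by (auto simp: length_Suc_conv numeral_eq_Suc)

lemma length_4_cases: "length vs = 4 \<Longrightarrow> \<exists>u v w x. vs = [u, v, w, x]"
  by (auto simp: length_Suc_conv numeral_eq_Suc)

lemma multilinear_alpha: "multilinear_form 3 alpha"
  unfolding alpha_def[abs_def]
  by (intro multilinear_form_add multilinear_form_diff multilinear_form_cmult multilinear_ef) simp_all

lemma multilinear_beta: "multilinear_form 4 beta"
  unfolding beta_def[abs_def]
  by (intro multilinear_form_add multilinear_form_diff multilinear_form_cmult
      multilinear_form_uminus multilinear_ef) simp_all

lemma axis_one_nth: "(axis i 1 :: real^7) $ j = (if j = i then 1 else 0)"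
  by (simp add: axis_def)

text \<open>The coordinates \<open>(x\<^sub>1, \<dots>, x\<^sub>4, w\<^sup>1, w\<^sup>2, w\<^sup>3)\<close> are sent to
  \<open>(3w\<^sup>1, 3w\<^sup>2, -3w\<^sup>3, \<surd>3 x\<^sub>1, -\<surd>3 x\<^sub>2, -\<surd>3 x\<^sub>3, -\<surd>3 x\<^sub>4)\<close>; the irrational entries are
  forced by the ratio \<open>3\<close> between the coefficients of \<open>w\<^sup>1\<^sup>2\<^sup>3\<close> and \<open>\<omega>\<^sub>s \<and> w\<^sup>s\<close> in \<open>alpha\<close>.\<close>
definition g2_frame :: "real^7^7" where
  "g2_frame = sparse_matrix [(0, 4, 3), (1, 5, 3), (2, 6, -3),
     (3, 0, sqrt 3), (4, 1, - sqrt 3), (5, 2, - sqrt 3), (6, 3, - sqrt 3)]"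

definition g2_frame_inv :: "real^7^7" where
  "g2_frame_inv = sparse_matrix [(4, 0, 1/3), (5, 1, 1/3), (6, 2, -1/3),
     (0, 3, 1 / sqrt 3), (1, 4, - 1 / sqrt 3), (2, 5, - 1 / sqrt 3), (3, 6, - 1 / sqrt 3)]"

lemma g2_frame_inverse: "g2_frame ** g2_frame_inv = mat 1" "g2_frame_inv ** g2_frame = mat 1"
  unfolding vec_eq_iff forall_7
  by (simp_all add: matrix_matrix_mult_def sum_7 g2_frame_def g2_frame_inv_def mat_def)

lemma alpha_pullback: "phi_split [g2_frame *v u, g2_frame *v v, g2_frame *v w] = 9 * alpha [u, v, w]"
proof -
  define r where "r = sqrt 3"
  have r: "r * r = 3"
    by (simp add: r_def)
  have r': "r * (r * x) = 3 * x" for x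
    using r by (simp add: mult.assoc[symmetric])
  have frame: "g2_frame = sparse_matrix [(0, 4, 3), (1, 5, 3), (2, 6, -3),
      (3, 0, r), (4, 1, - r), (5, 2, - r), (6, 3, - r)]"
    by (simp add: g2_frame_def r_def)
  show ?thesis
    unfolding alpha_def phi_split_def ef_laplace_3 ef_pair idx_simps
    by (simp add: matrix_vector_mult_def sum_7 frame algebra_simps r')
qed

lemma stab_alpha_conj: "stab 3 alpha = {A. g2_frame ** A ** g2_frame_inv \<in> g2_split}"
  unfolding g2_split_def
proof (rule stab_pullback[OF _ _ g2_frame_inverse])
  show "\<forall>vs. length vs = 3 \<longrightarrow> alpha vs = 1/9 * phi_split (map ((*v) g2_frame) vs)"
    using length_3_cases alpha_pullback by fastforce
qed simp

text \<open>Indices \<open>0..3\<close> carry \<open>e\<^sub>1..e\<^sub>4\<close> and \<open>4..6\<close> carry \<open>w\<^sup>1..w\<^sup>3\<close>.  In these blocks the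
  conditions say: the \<open>\<real>\<^sup>4\<close> block is skew, the \<open>\<real>\<^sup>3\<close> block is the image of it under a
  projection \<open>so(4) \<rightarrow> so(3)\<close>, the first row of the lower left block is determined by the
  other two, and the upper right block is \<open>c\<close> times the transposed lower left block.\<close>
definition g2_conds :: "real \<Rightarrow> real^7^7 \<Rightarrow> bool" where
  "g2_conds c A \<longleftrightarrow>
     (\<forall>i. A$i$i = 0) \<and>
     A$0$1 = - A$1$0 \<and> A$0$2 = - A$2$0 \<and> A$0$3 = - A$3$0 \<and>
     A$1$2 = - A$2$1 \<and> A$1$3 = - A$3$1 \<and> A$2$3 = - A$3$2 \<and>
     A$4$5 = - A$5$4 \<and> A$4$6 = - A$6$4 \<and> A$5$6 = - A$6$5 \<and>
     A$5$4 = A$2$1 - A$3$0 \<and> A$6$4 = A$2$0 + A$3$1 \<and> A$6$5 = A$3$2 - A$1$0 \<and>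
     A$4$0 = A$5$3 - A$6$2 \<and> A$4$1 = - A$5$2 - A$6$3 \<and>
     A$4$2 = A$5$1 + A$6$0 \<and> A$4$3 = A$6$1 - A$5$0 \<and>
     (\<forall>i\<in>{0,1,2,3}. \<forall>j\<in>{4,5,6}. A$i$j = c * A$j$i)"

lemma g2_conds_3_imp_stab_alpha:
  assumes "g2_conds 3 A"
  shows "A \<in> stab 3 alpha"
  unfolding stab_def mem_Collect_eq
proof (intro allI impI)
  fix vs :: "(real^7) list"
  assume "length vs = 3"
  then obtain u v w where vs: "vs = [u, v, w]"
    using length_3_cases by blast
  note conds = assms[unfolded g2_conds_def]
  show "form_act A alpha vs = 0"
    unfolding vs form_act_3 alpha_def ef_laplace_3 ef_pair idx_simps
    by (simp add: matrix_vector_mult_def sum_7 conds, algebra)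
qed

lemma stab_alpha_imp_g2_conds_3:
  assumes "A \<in> stab 3 alpha"
  shows "g2_conds 3 A"
proof -
  have e: "form_act A alpha [axis i 1, axis j 1, axis k 1] = 0" for i j k
    using assms by (simp add: stab_def)
  note lin = e[of 0 1 2] e[of 0 1 3] e[of 0 1 4] e[of 0 1 5] e[of 0 1 6] e[of 0 2 3] e[of 0 2 4]
    e[of 0 2 5] e[of 0 2 6] e[of 0 3 4] e[of 0 3 5] e[of 0 3 6] e[of 0 4 5] e[of 0 4 6] e[of 0 5 6]
    e[of 1 2 3] e[of 1 2 4] e[of 1 2 5] e[of 1 2 6] e[of 1 3 4] e[of 1 3 5] e[of 1 3 6] e[of 1 4 5]
    e[of 1 4 6] e[of 1 5 6] e[of 2 3 4] e[of 2 3 5] e[of 2 3 6] e[of 2 4 5] e[of 2 4 6] e[of 2 5 6]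
    e[of 3 4 5] e[of 3 4 6] e[of 3 5 6] e[of 4 5 6]
  show ?thesis
    unfolding g2_conds_def forall_7 ball_simps(5,7)
    using lin[unfolded form_act_3 alpha_def ef_laplace_3 ef_pair idx_simps
        matrix_vector_mult_basis column_def, unfolded axis_def, simplified]
    by (intro conjI TrueI; linarith)
qed

lemma stab_alpha_eq: "stab 3 alpha = {A. g2_conds 3 A}"
  using g2_conds_3_imp_stab_alpha stab_alpha_imp_g2_conds_3 by blast

lemma g2_conds_third_imp_stab_beta:
  assumes "g2_conds (1/3) A"
  shows "A \<in> stab 4 beta"
  unfolding stab_def mem_Collect_eq
proof (intro allI impI)
  fix vs :: "(real^7) list"
  assume "length vs = 4"
  then obtain u v w x where vs: "vs = [u, v, w, x]"
    using length_4_cases by blast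
  note conds = assms[unfolded g2_conds_def]
  show "form_act A beta vs = 0"
    unfolding vs form_act_4 beta_def ef_laplace_4 ef_laplace_3 ef_pair idx_simps
    by (simp add: matrix_vector_mult_def sum_7 conds, algebra)
qed

lemma stab_beta_imp_g2_conds_third:
  assumes "A \<in> stab 4 beta"
  shows "g2_conds (1/3) A"
proof -
  have e: "form_act A beta [axis i 1, axis j 1, axis k 1, axis l 1] = 0" for i j k l
    using assms by (simp add: stab_def)
  note lin = e[of 0 1 2 3] e[of 0 1 2 4] e[of 0 1 2 5] e[of 0 1 2 6] e[of 0 1 3 4] e[of 0 1 3 5]
    e[of 0 1 3 6] e[of 0 1 4 5] e[of 0 1 4 6] e[of 0 1 5 6] e[of 0 2 3 4] e[of 0 2 3 5] e[of 0 2 3 6]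
    e[of 0 2 4 5] e[of 0 2 4 6] e[of 0 2 5 6] e[of 0 3 4 5] e[of 0 3 4 6] e[of 0 3 5 6] e[of 0 4 5 6]
    e[of 1 2 3 4] e[of 1 2 3 5] e[of 1 2 3 6] e[of 1 2 4 5] e[of 1 2 4 6] e[of 1 2 5 6] e[of 1 3 4 5]
    e[of 1 3 4 6] e[of 1 3 5 6] e[of 1 4 5 6] e[of 2 3 4 5] e[of 2 3 4 6] e[of 2 3 5 6] e[of 2 4 5 6]
    e[of 3 4 5 6]
  show ?thesis
    unfolding g2_conds_def forall_7 ball_simps(5,7)
    using lin[unfolded form_act_4 beta_def ef_laplace_4 ef_laplace_3 ef_pair idx_simps
        matrix_vector_mult_basis column_def, unfolded axis_def, simplified]
    by (intro conjI TrueI; linarith)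
qed

lemma stab_beta_eq: "stab 4 beta = {A. g2_conds (1/3) A}"
  using g2_conds_third_imp_stab_beta stab_beta_imp_g2_conds_third by blast

definition w_scale :: "real \<Rightarrow> real^7^7" where
  "w_scale t = (\<chi> i j. if i = j then (if i \<in> {4, 5, 6} then t else 1) else 0)"

lemma w_scale_mult_nth: "(w_scale t ** A) $ i $ j = (if i \<in> {4, 5, 6} then t else 1) * A $ i $ j"
proof -
  have "(\<Sum>k\<in>UNIV. (if i = k then (if i \<in> {4, 5, 6} then t else 1) else 0) * A $ k $ j) =
      (\<Sum>k\<in>UNIV. if k = i then (if i \<in> {4, 5, 6} then t else 1) * A $ i $ j else 0)"
    by (rule sum.cong) auto
  then show ?thesis
    by (simp add: matrix_matrix_mult_def w_scale_def)
qed

lemma mult_w_scale_nth: "(A ** w_scale t) $ i $ j = A $ i $ j * (if j \<in> {4, 5, 6} then t else 1)"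
proof -
  have "(\<Sum>k\<in>UNIV. A $ i $ k * (if k = j then (if k \<in> {4, 5, 6} then t else 1) else 0)) =
      (\<Sum>k\<in>UNIV. if k = j then A $ i $ j * (if j \<in> {4, 5, 6} then t else 1) else 0)"
    by (rule sum.cong) auto
  then show ?thesis
    by (simp add: matrix_matrix_mult_def w_scale_def)
qed

lemma w_scale_inverse: "t \<noteq> 0 \<Longrightarrow> w_scale t ** w_scale (1 / t) = mat 1"
  unfolding vec_eq_iff w_scale_mult_nth by (simp add: w_scale_def mat_def)

lemma g2_conds_w_scale:
  assumes t: "t \<noteq> 0" and A: "g2_conds c A"
  shows "g2_conds (c / t\<^sup>2) (w_scale t ** A ** w_scale (1 / t))"
  using t
  unfolding g2_conds_def forall_7 ball_simps(5,7) w_scale_mult_nth mult_w_scale_nth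
  by (simp add: A[unfolded g2_conds_def] field_simps power2_eq_square)

lemma g2_conds_w_scale_iff:
  assumes t: "t \<noteq> 0"
  shows "g2_conds (c / t\<^sup>2) (w_scale t ** A ** w_scale (1 / t)) \<longleftrightarrow> g2_conds c A"
proof
  assume "g2_conds (c / t\<^sup>2) (w_scale t ** A ** w_scale (1 / t))"
  from g2_conds_w_scale[OF _ this, of "1 / t"] t
  have "g2_conds c ((w_scale (1 / t) ** w_scale t) ** A ** (w_scale (1 / t) ** w_scale t))"
    by (simp add: matrix_mul_assoc power2_eq_square)
  moreover have "w_scale (1 / t) ** w_scale t = mat 1"
    using w_scale_inverse[of "1 / t"] t by simp
  ultimately show "g2_conds c A"
    by simp
qed (rule g2_conds_w_scale[OF t])

lemma stab_beta_conj: "stab 4 beta = {A. w_scale (1/3) ** A ** w_scale 3 \<in> stab 3 alpha}"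
  using g2_conds_w_scale_iff[of "1/3" "1/3"]
  by (simp add: stab_alpha_eq stab_beta_eq power2_eq_square)

lemma g2_conds_inj:
  assumes "{A. g2_conds c A} = {A. g2_conds c' A}"
  shows "c = c'"
proof -
  let ?A = "sparse_matrix [(0, 5, c), (3, 4, - c), (4, 3, -1), (5, 0, 1)]"
  have "g2_conds c ?A"
    unfolding g2_conds_def forall_7 by simp
  with assms have "g2_conds c' ?A"
    by blast
  then show ?thesis
    unfolding g2_conds_def by simp
qed

definition so4_conds :: "real^7^7 \<Rightarrow> bool" where
  "so4_conds A \<longleftrightarrow> g2_conds 0 A \<and> (\<forall>i\<in>{0,1,2,3}. \<forall>j\<in>{4,5,6}. A$j$i = 0)"

lemma g2_conds_inter_iff:
  assumes "c \<noteq> c'"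
  shows "g2_conds c A \<and> g2_conds c' A \<longleftrightarrow> so4_conds A"
proof
  assume A: "g2_conds c A \<and> g2_conds c' A"
  have "\<forall>i\<in>{0,1,2,3}. \<forall>j\<in>{4,5,6}. A$j$i = 0"
  proof (intro ballI)
    fix i j :: 7
    assume "i \<in> {0,1,2,3}" "j \<in> {4,5,6}"
    with A have "A$i$j = c * A$j$i" "A$i$j = c' * A$j$i"
      unfolding g2_conds_def by blast+
    then have "c * A$j$i = c' * A$j$i"
      by metis
    with assms show "A$j$i = 0"
      by auto
  qed
  with A show "so4_conds A"
    unfolding so4_conds_def g2_conds_def by simp
next
  assume "so4_conds A"
  then show "g2_conds c A \<and> g2_conds c' A"
    unfolding so4_conds_def g2_conds_def by simp
qed

definition ul_index :: "4 \<Rightarrow> 7" where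
  "ul_index i = (if i = 1 then 0 else if i = 2 then 1 else if i = 3 then 2 else 3)"

definition ul_block :: "real^7^7 \<Rightarrow> real^4^4" where
  "ul_block A = (\<chi> i j. A $ ul_index i $ ul_index j)"

lemma ul_index_simps: "ul_index 1 = 0" "ul_index 2 = 1" "ul_index 3 = 2" "ul_index 4 = 3"
  by (simp_all add: ul_index_def)

lemma ul_block_nth: "ul_block A $ i $ j = A $ ul_index i $ ul_index j"
  by (simp add: ul_block_def)

lemma linear_ul_block: "linear ul_block"
  by (rule linearI) (simp_all add: ul_block_def vec_eq_iff)

text \<open>The generators built from \<open>\<varpi>\<^sub>s\<close> and from \<open>\<omega>\<^sub>s\<close> share their two entries in the \<open>\<real>\<^sup>4\<close>
  block, with equal signs in \<open>\<varpi>\<^sub>s\<close> and opposite signs in \<open>\<omega>\<^sub>s\<close>; hence the half-sums and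
  half-differences.\<close>
definition so4_embed :: "real^4^4 \<Rightarrow> real^7^7" where
  "so4_embed M =
       ((M$2$1 + M$4$3) / 2) *\<^sub>R so_of (\<lambda>vs. ef [1,2] vs + ef [3,4] vs)
     + ((M$3$1 - M$4$2) / 2) *\<^sub>R so_of (\<lambda>vs. ef [1,3] vs + ef [4,2] vs)
     + ((M$4$1 + M$3$2) / 2) *\<^sub>R so_of (\<lambda>vs. ef [1,4] vs + ef [2,3] vs)
     + ((M$2$1 - M$4$3) / 2) *\<^sub>R so_of (\<lambda>vs. ef [1,2] vs - ef [3,4] vs - 2 * ef [6,7] vs)
     + ((M$3$1 + M$4$2) / 2) *\<^sub>R so_of (\<lambda>vs. ef [1,3] vs - ef [4,2] vs - 2 * ef [7,5] vs)
     + ((M$4$1 - M$3$2) / 2) *\<^sub>R so_of (\<lambda>vs. ef [1,4] vs - ef [2,3] vs - 2 * ef [5,6] vs)"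

lemma so4_embed_in_span: "so4_embed M \<in> span so4_gens"
  unfolding so4_embed_def so4_gens_def by (intro span_add span_scale span_base) simp_all

lemma so4_embed_ul_block:
  assumes "so4_conds A"
  shows "so4_embed (ul_block A) = A"
  unfolding vec_eq_iff forall_7
  by (simp add: assms[unfolded so4_conds_def g2_conds_def] so4_embed_def so_of_def ef_pair
      idx_def axis_one_nth ul_block_nth ul_index_simps field_simps)

lemma ul_block_so4_embed:
  assumes "M \<in> so4"
  shows "ul_block (so4_embed M) = M"
proof -
  have skew: "M $ j $ i = - M $ i $ j" for i j
    using arg_cong[OF assms[unfolded so4_def mem_Collect_eq], of "\<lambda>N. N $ i $ j"]
    by (simp add: transpose_def)
  have diag: "M $ i $ i = 0" for i
    using skew[of i i] by simp
  show ?thesis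
    unfolding vec_eq_iff forall_4
    by (simp add: diag skew[of 1 2] skew[of 1 3] skew[of 1 4] skew[of 2 3] skew[of 2 4] skew[of 3 4]
        so4_embed_def so_of_def ef_pair idx_def axis_one_nth ul_block_nth ul_index_simps
        add_divide_distrib diff_divide_distrib algebra_simps)
qed

lemma ul_block_in_so4: "so4_conds A \<Longrightarrow> ul_block A \<in> so4"
  unfolding so4_def mem_Collect_eq vec_eq_iff forall_4 so4_conds_def g2_conds_def
  by (simp add: transpose_def ul_block_nth ul_index_simps)

lemma ul_block_lie_br:
  assumes "so4_conds X" "so4_conds Y"
  shows "ul_block (lie_br X Y) = lie_br (ul_block X) (ul_block Y)"
  unfolding lie_br_def vec_eq_iff forall_4
  by (simp add: assms[unfolded so4_conds_def g2_conds_def] ul_block_nth ul_index_simps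
      matrix_matrix_mult_def sum_7 sum_4 algebra_simps)

lemma so4_conds_eq_stab_inter: "{A. so4_conds A} = stab 3 alpha \<inter> stab 4 beta"
  using g2_conds_inter_iff[of 3 "1/3"] by (auto simp: stab_alpha_eq stab_beta_eq)

lemma so4_conds_eq_span: "{A. so4_conds A} = span so4_gens"
proof
  show "{A. so4_conds A} \<subseteq> span so4_gens"
    using so4_embed_ul_block so4_embed_in_span by (metis mem_Collect_eq subsetI)
  have "subspace {A. so4_conds A}"
    unfolding so4_conds_eq_stab_inter
    by (intro subspace_inter stab_subspace multilinear_alpha multilinear_beta)
  moreover have "so4_gens \<subseteq> {A. so4_conds A}"
    unfolding so4_gens_def so4_conds_def g2_conds_def forall_7
    by (simp add: so_of_def ef_pair idx_def axis_one_nth)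
  ultimately show "span so4_gens \<subseteq> {A. so4_conds A}"
    by (rule span_minimal[rotated])
qed

lemma lie_iso_so4: "lie_iso {A. so4_conds A} so4"
proof -
  have "inj_on ul_block {A. so4_conds A}"
    by (metis (mono_tags) inj_onI mem_Collect_eq so4_embed_ul_block)
  moreover have "ul_block ` {A. so4_conds A} = so4"
  proof
    show "ul_block ` {A. so4_conds A} \<subseteq> so4"
      using ul_block_in_so4 by blast
    show "so4 \<subseteq> ul_block ` {A. so4_conds A}"
    proof
      fix M
      assume M: "M \<in> so4"
      have "so4_conds (so4_embed M)"
        using so4_embed_in_span so4_conds_eq_span by blast
      with ul_block_so4_embed[OF M] show "M \<in> ul_block ` {A. so4_conds A}"
        by (metis image_eqI mem_Collect_eq)
    qed
  qed
  ultimately show ?thesis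
    unfolding lie_iso_def bij_betw_def using linear_ul_block ul_block_lie_br by blast
qed

theorem lemma2p1:
  shows "lie_subalgebra (stab 3 alpha) \<and> lie_subalgebra (stab 4 beta)
       \<and> stab 3 alpha \<noteq> stab 4 beta
       \<and> lie_iso (stab 3 alpha) g2_split \<and> lie_iso (stab 4 beta) g2_split
       \<and> stab 3 alpha \<inter> stab 4 beta = span so4_gens
       \<and> lie_iso (stab 3 alpha \<inter> stab 4 beta) so4"
proof -
  have "stab 3 alpha \<noteq> stab 4 beta"
    using g2_conds_inj[of 3 "1/3"] by (auto simp: stab_alpha_eq stab_beta_eq)
  moreover have "lie_iso (stab 3 alpha) g2_split"
    using lie_iso_conj[OF stab_alpha_conj g2_frame_inverse] .
  moreover have "lie_iso (stab 4 beta) g2_split"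
  proof (rule lie_iso_conj)
    show "stab 4 beta =
        {A. (g2_frame ** w_scale (1/3)) ** A ** (w_scale 3 ** g2_frame_inv) \<in> g2_split}"
      unfolding stab_beta_conj stab_alpha_conj by (simp add: matrix_mul_assoc)
    show "(g2_frame ** w_scale (1/3)) ** (w_scale 3 ** g2_frame_inv) = mat 1"
      using w_scale_inverse[of "1/3"] g2_frame_inverse(1)
      by (simp add: matrix_mul_assoc) (simp add: matrix_mul_assoc[symmetric])
    show "(w_scale 3 ** g2_frame_inv) ** (g2_frame ** w_scale (1/3)) = mat 1"
      using w_scale_inverse[of 3] g2_frame_inverse(2)
      by (simp add: matrix_mul_assoc) (simp add: matrix_mul_assoc[symmetric])
  qed
  ultimately show ?thesis
    using lie_subalgebra_stab[OF multilinear_alpha] lie_subalgebra_stab[OF multilinear_beta]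
      lie_iso_so4 so4_conds_eq_stab_inter so4_conds_eq_span by simp
qed

end
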